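(* Let $(X,Y)$ be a conditionally dependent (CD) random vector with function $s$ on $(0,\infty)$. If $X$ is independent of $Y$, then $s(y)=1$ for all $y\in D_Y$. Conversely, $s(y)=1$ for all $y\in D_Y$ does not imply independence of $X$ and $Y$: there exist CD random vectors $(X,Y)$ with $s\equiv1$ on $D_Y$ for which $X$ and $Y$ are not independent.
   Context: $X$ is real-valued with distribution $F$ such that $\overline F(x)=1-F(x)>0$ for all $x\in\mathbb{R}$, and $Y$ takes values in $(0,\infty)$. Let $D_Y=\{y\in(0,\infty):\mathrm P(Y\in(y-\delta,y+\delta))>0\ \forall\delta>0\}$. For $x\in\mathbb{R}$ and $y\in D_Y$, $\mathrm P(X>x\mid Y=y)=\lim_{t\downarrow0}\mathrm P(X>x,Y\in[y,y+t))/\mathrm P(Y\in[y,y+t))$ when this limit exists. $(X,Y)$ is conditionally dependent (CD) with function $s$ if $s$ is a positive measurable function such that these conditional tails exist and $\lim_{x\to\infty}\sup_{y\in D_Y}|\mathrm P(X>x\mid Y=y)/(\overline F(x)s(y))-1|=0$. *)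

theory Defs
  imports "HOL-Probability.Probability"
begin

definition tailF :: "'a measure \<Rightarrow> ('a \<Rightarrow> real) \<Rightarrow> real \<Rightarrow> real" where
  "tailF M X x = measure M {\<omega>\<in>space M. X \<omega> > x}"

definition D_Y :: "'a measure \<Rightarrow> ('a \<Rightarrow> real) \<Rightarrow> real set" where
  "D_Y M Y = {y. 0 < y \<and> (\<forall>\<delta>>0. measure M {\<omega>\<in>space M. Y \<omega> \<in> {y-\<delta><..<y+\<delta>}} > 0)}"

definition cond_ratio :: "'a measure \<Rightarrow> ('a \<Rightarrow> real) \<Rightarrow> ('a \<Rightarrow> real) \<Rightarrow> real \<Rightarrow> real \<Rightarrow> real \<Rightarrow> real" where
  "cond_ratio M X Y x y t =
     measure M {\<omega>\<in>space M. X \<omega> > x \<and> Y \<omega> \<in> {y..<y+t}} / measure M {\<omega>\<in>space M. Y \<omega> \<in> {y..<y+t}}"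

definition cond_tail_exists :: "'a measure \<Rightarrow> ('a \<Rightarrow> real) \<Rightarrow> ('a \<Rightarrow> real) \<Rightarrow> real \<Rightarrow> real \<Rightarrow> bool" where
  "cond_tail_exists M X Y x y \<longleftrightarrow>
     (\<forall>\<^sub>F t in at_right 0. measure M {\<omega>\<in>space M. Y \<omega> \<in> {y..<y+t}} > 0) \<and>
     (\<exists>L. (cond_ratio M X Y x y \<longlongrightarrow> L) (at_right 0))"

definition cond_tail :: "'a measure \<Rightarrow> ('a \<Rightarrow> real) \<Rightarrow> ('a \<Rightarrow> real) \<Rightarrow> real \<Rightarrow> real \<Rightarrow> real" where
  "cond_tail M X Y x y = Lim (at_right 0) (cond_ratio M X Y x y)"

text \<open>(X,Y) is conditionally dependent (CD) with function s.
  The uniform condition lim_{x\<rightarrow>\<infinity>} sup_{y\<in>D_Y} |...| = 0 is written out with epsilons.\<close>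
definition CD :: "'a measure \<Rightarrow> ('a \<Rightarrow> real) \<Rightarrow> ('a \<Rightarrow> real) \<Rightarrow> (real \<Rightarrow> real) \<Rightarrow> bool" where
  "CD M X Y s \<longleftrightarrow>
     X \<in> borel_measurable M \<and> Y \<in> borel_measurable M \<and>
     (\<forall>\<omega>\<in>space M. Y \<omega> > 0) \<and>
     (\<forall>x. tailF M X x > 0) \<and>
     s \<in> borel_measurable (restrict_space borel {0<..}) \<and> (\<forall>y>0. s y > 0) \<and>
     (\<forall>x. \<forall>y\<in>D_Y M Y. cond_tail_exists M X Y x y) \<and>
     (\<forall>\<epsilon>>0. \<forall>\<^sub>F x in at_top. \<forall>y\<in>D_Y M Y.
        \<bar>cond_tail M X Y x y / (tailF M X x * s y) - 1\<bar> \<le> \<epsilon>)"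

end

theory Submission
  imports Defs
begin

text \<open>If \<open>X\<close> and \<open>Y\<close> are independent, every ratio
  \<open>P(X > x, Y \<in> [y, y + t)) / P(Y \<in> [y, y + t))\<close> equals \<open>P(X > x)\<close>, so the ratio in the
  CD condition is identically \<open>1 / s y\<close> and must tend to \<open>1\<close>. Conversely, \<open>s\<close> only sees the
  joint law on the events \<open>X > x\<close> for large \<open>x\<close>. In the counterexample \<open>Y\<close> is a fair coin with
  values \<open>1, 2\<close> and \<open>X\<close> an independent geometric variable, except that \<open>X\<close> is moved to \<open>-1\<close> on
  the atom \<open>{X = 0, Y = 1}\<close>: this destroys independence but leaves
  \<open>P(X > x, Y = y) = P(X > x) P(Y = y)\<close> for all \<open>x \<ge> 0\<close>, so \<open>s = 1\<close>.\<close>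

lemma cond_tail_eqI:
  assumes "(cond_ratio M X Y x y \<longlongrightarrow> c) (at_right 0)"
  shows "cond_tail M X Y x y = c"
  using assms unfolding cond_tail_def
  by (intro tendsto_Lim) (auto simp: trivial_limit_at_right_real)

lemma CD_ratio_tendsto:
  assumes "CD M X Y s" and "y \<in> D_Y M Y"
  shows "((\<lambda>x. cond_tail M X Y x y / tailF M X x) \<longlongrightarrow> s y) at_top"
proof -
  have "s y > 0" using assms by (auto simp: CD_def D_Y_def)
  have "((\<lambda>x. cond_tail M X Y x y / tailF M X x / s y) \<longlongrightarrow> 1) at_top"
    unfolding tendsto_iff dist_real_def
  proof (intro allI impI)
    fix e :: real assume "e > 0"
    then have "\<forall>\<^sub>F x in at_top. \<forall>y\<in>D_Y M Y. \<bar>cond_tail M X Y x y / (tailF M X x * s y) - 1\<bar> \<le> e / 2"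
      using assms(1) unfolding CD_def by (meson half_gt_zero)
    then show "\<forall>\<^sub>F x in at_top. \<bar>cond_tail M X Y x y / tailF M X x / s y - 1\<bar> < e"
      by eventually_elim (use assms(2) \<open>e > 0\<close> in fastforce)
  qed
  then have "((\<lambda>x. cond_tail M X Y x y / tailF M X x / s y * s y) \<longlongrightarrow> 1 * s y) at_top"
    by (rule tendsto_mult_right)
  then show ?thesis using \<open>s y > 0\<close> by simp
qed

lemma (in prob_space) cond_ratio_indep:
  assumes "indep_var borel X borel Y"
    and "measure M {\<omega>\<in>space M. Y \<omega> \<in> {y..<y+t}} \<noteq> 0"
  shows "cond_ratio M X Y x y t = tailF M X x"
proof -
  have "prob ((\<lambda>\<omega>. (X \<omega>, Y \<omega>)) -` ({x<..} \<times> {y..<y+t}) \<inter> space M) =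
      prob (X -` {x<..} \<inter> space M) * prob (Y -` {y..<y+t} \<inter> space M)"
    by (rule indep_varD[OF assms(1)]) auto
  then have "prob {\<omega>\<in>space M. X \<omega> > x \<and> Y \<omega> \<in> {y..<y+t}} =
      tailF M X x * prob {\<omega>\<in>space M. Y \<omega> \<in> {y..<y+t}}"
    unfolding tailF_def by (simp add: vimage_def Int_def conj_commute)
  with assms(2) show ?thesis by (simp add: cond_ratio_def)
qed

lemma (in prob_space) cond_tail_indep:
  assumes "indep_var borel X borel Y" and "cond_tail_exists M X Y x y"
  shows "cond_tail M X Y x y = tailF M X x"
proof (rule cond_tail_eqI, rule tendsto_eventually)
  have "\<forall>\<^sub>F t in at_right 0. measure M {\<omega>\<in>space M. Y \<omega> \<in> {y..<y+t}} > 0"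
    using assms(2) by (simp add: cond_tail_exists_def)
  then show "\<forall>\<^sub>F t in at_right 0. cond_ratio M X Y x y t = tailF M X x"
    by eventually_elim (simp add: cond_ratio_indep[OF assms(1)])
qed

lemma (in prob_space) CD_indep_imp_eq_1:
  assumes "CD M X Y s" and "indep_var borel X borel Y" and "y \<in> D_Y M Y"
  shows "s y = 1"
proof -
  have ratio_1: "cond_tail M X Y x y / tailF M X x = 1" for x
  proof -
    have "tailF M X x > 0" and "cond_tail_exists M X Y x y"
      using assms(1,3) by (auto simp: CD_def)
    then show ?thesis by (simp add: cond_tail_indep[OF assms(2)])
  qed
  then have "((\<lambda>x::real. 1) \<longlongrightarrow> s y) at_top"
    using CD_ratio_tendsto[OF assms(1,3)] by (simp only: ratio_1)
  then show ?thesis by (simp add: tendsto_const_iff)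
qed

lemma finite_range_isolated:
  fixes Y :: "'a \<Rightarrow> real"
  assumes "finite (Y ` space M)"
  obtains d where "d > 0" and "\<And>\<omega>. \<omega> \<in> space M \<Longrightarrow> \<bar>Y \<omega> - y\<bar> < d \<Longrightarrow> Y \<omega> = y"
proof -
  obtain d where "d > 0" and "\<forall>v\<in>Y ` space M. v \<noteq> y \<longrightarrow> d \<le> dist y v"
    using finite_set_avoid[OF assms] by blast
  then show ?thesis
    by (intro that[of d]) (auto simp: dist_real_def abs_minus_commute)
qed

lemma finite_range_interval_event:
  fixes Y :: "'a \<Rightarrow> real"
  assumes "finite (Y ` space M)"
  shows "\<forall>\<^sub>F t in at_right 0.
    {\<omega>\<in>space M. P \<omega> \<and> Y \<omega> \<in> {y..<y+t}} = {\<omega>\<in>space M. P \<omega> \<and> Y \<omega> = y}"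
proof -
  obtain d where "d > 0" and isolated: "\<And>\<omega>. \<omega> \<in> space M \<Longrightarrow> \<bar>Y \<omega> - y\<bar> < d \<Longrightarrow> Y \<omega> = y"
    using finite_range_isolated[OF assms] by blast
  show ?thesis
    unfolding eventually_at_right_field
    by (rule exI[of _ d]) (use \<open>d > 0\<close> isolated in fastforce)
qed

lemma finite_range_D_Y_imp_atom:
  fixes Y :: "'a \<Rightarrow> real"
  assumes "finite (Y ` space M)" and "y \<in> D_Y M Y"
  shows "measure M {\<omega>\<in>space M. Y \<omega> = y} > 0"
proof -
  obtain d where "d > 0" and isolated: "\<And>\<omega>. \<omega> \<in> space M \<Longrightarrow> \<bar>Y \<omega> - y\<bar> < d \<Longrightarrow> Y \<omega> = y"
    using finite_range_isolated[OF assms(1)] by blast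
  have "{\<omega>\<in>space M. Y \<omega> \<in> {y-d<..<y+d}} = {\<omega>\<in>space M. Y \<omega> = y}"
    using \<open>d > 0\<close> isolated by force
  moreover have "measure M {\<omega>\<in>space M. Y \<omega> \<in> {y-d<..<y+d}} > 0"
    using assms(2) \<open>d > 0\<close> by (simp add: D_Y_def)
  ultimately show ?thesis by simp
qed

lemma cond_tail_finite_range:
  fixes Y :: "'a \<Rightarrow> real"
  assumes "finite (Y ` space M)" and "y \<in> D_Y M Y"
  shows "cond_tail_exists M X Y x y"
    and "cond_tail M X Y x y =
      measure M {\<omega>\<in>space M. X \<omega> > x \<and> Y \<omega> = y} / measure M {\<omega>\<in>space M. Y \<omega> = y}"
proof -
  have denominator: "\<forall>\<^sub>F t in at_right 0.
      {\<omega>\<in>space M. Y \<omega> \<in> {y..<y+t}} = {\<omega>\<in>space M. Y \<omega> = y}"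
    using finite_range_interval_event[OF assms(1), of "\<lambda>_. True"] by simp
  have numerator: "\<forall>\<^sub>F t in at_right 0.
      {\<omega>\<in>space M. X \<omega> > x \<and> Y \<omega> \<in> {y..<y+t}} = {\<omega>\<in>space M. X \<omega> > x \<and> Y \<omega> = y}"
    by (rule finite_range_interval_event[OF assms(1)])
  have "\<forall>\<^sub>F t in at_right 0. cond_ratio M X Y x y t =
      measure M {\<omega>\<in>space M. X \<omega> > x \<and> Y \<omega> = y} / measure M {\<omega>\<in>space M. Y \<omega> = y}"
    using numerator denominator by eventually_elim (simp add: cond_ratio_def)
  then have limit: "(cond_ratio M X Y x y \<longlongrightarrow>
      measure M {\<omega>\<in>space M. X \<omega> > x \<and> Y \<omega> = y} / measure M {\<omega>\<in>space M. Y \<omega> = y}) (at_right 0)"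
    by (rule tendsto_eventually)
  then show "cond_tail M X Y x y =
      measure M {\<omega>\<in>space M. X \<omega> > x \<and> Y \<omega> = y} / measure M {\<omega>\<in>space M. Y \<omega> = y}"
    by (rule cond_tail_eqI)
  have "\<forall>\<^sub>F t in at_right 0. measure M {\<omega>\<in>space M. Y \<omega> \<in> {y..<y+t}} > 0"
    using denominator by eventually_elim (simp add: finite_range_D_Y_imp_atom[OF assms])
  with limit show "cond_tail_exists M X Y x y"
    unfolding cond_tail_exists_def by blast
qed

lemma CD_const_one_if_tail_indep:
  fixes X Y :: "'a \<Rightarrow> real"
  assumes "X \<in> borel_measurable M" and "Y \<in> borel_measurable M"
    and "finite (Y ` space M)" and "\<forall>\<omega>\<in>space M. Y \<omega> > 0" and "\<forall>x. tailF M X x > 0"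
    and tail_indep: "\<And>x y. x \<ge> x\<^sub>0 \<Longrightarrow>
      measure M {\<omega>\<in>space M. X \<omega> > x \<and> Y \<omega> = y} = tailF M X x * measure M {\<omega>\<in>space M. Y \<omega> = y}"
  shows "CD M X Y (\<lambda>_. 1)"
proof -
  have "cond_tail M X Y x y = tailF M X x" if "x \<ge> x\<^sub>0" and "y \<in> D_Y M Y" for x y
    using cond_tail_finite_range(2)[OF assms(3) \<open>y \<in> D_Y M Y\<close>]
      finite_range_D_Y_imp_atom[OF assms(3) \<open>y \<in> D_Y M Y\<close>] tail_indep[OF \<open>x \<ge> x\<^sub>0\<close>]
    by simp
  then have "\<forall>\<^sub>F x in at_top. \<forall>y\<in>D_Y M Y. \<bar>cond_tail M X Y x y / (tailF M X x * 1) - 1\<bar> \<le> e"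
    if "e > 0" for e :: real
    unfolding eventually_at_top_linorder
    using assms(5) \<open>e > 0\<close> by (intro exI[of _ x\<^sub>0]) (simp add: less_imp_neq[symmetric])
  then show ?thesis
    using assms cond_tail_finite_range(1)[OF assms(3)] by (simp add: CD_def)
qed

definition coin_geometric :: "(bool \<times> nat) pmf" where
  "coin_geometric = pair_pmf (bernoulli_pmf (1/2)) (geometric_pmf (1/2))"

definition cex_point :: "bool \<times> nat \<Rightarrow> real \<times> real" where
  "cex_point = (\<lambda>(b, n). (if b \<and> n = 0 then -1 else real n, if b then 1 else 2))"

definition cex_space :: "(real \<times> real) measure" where
  "cex_space = measure_pmf (map_pmf cex_point coin_geometric)"

text \<open>The label must be positive on all of \<open>space cex_space = UNIV\<close>, not only on the support,
  so it cannot simply be \<open>snd\<close>.\<close>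
definition cex_label :: "real \<times> real \<Rightarrow> real" where
  "cex_label \<omega> = (if snd \<omega> = 1 then 1 else 2)"

lemma prob_space_cex_space: "prob_space cex_space"
  by (simp add: cex_space_def prob_space_measure_pmf)

lemma measure_cex_space:
  "measure cex_space {\<omega>\<in>space cex_space. P \<omega>} = measure_pmf.prob coin_geometric {z. P (cex_point z)}"
  by (simp add: cex_space_def vimage_def)

lemma cex_label_point: "cex_label (cex_point (b, n)) = (if b then 1 else 2)"
  by (simp add: cex_label_def cex_point_def)

lemma cex_label_prob:
  "measure cex_space {\<omega>\<in>space cex_space. cex_label \<omega> = y} =
    measure_pmf.prob (bernoulli_pmf (1/2)) {b. (if b then 1 else 2) = y}"
proof -
  have "{z. cex_label (cex_point z) = y} = {b. (if b then 1 else 2) = y} \<times> UNIV"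
    by (auto simp: cex_label_point)
  then show ?thesis
    unfolding measure_cex_space coin_geometric_def
    by (simp add: measure_pmf_prob_product)
qed

lemma cex_tail_prob:
  assumes "x \<ge> 0"
  shows "measure cex_space {\<omega>\<in>space cex_space. fst \<omega> > x \<and> Q (cex_label \<omega>)} =
    measure_pmf.prob (bernoulli_pmf (1/2)) {b. Q (if b then 1 else 2)} *
    measure_pmf.prob (geometric_pmf (1/2)) {n. real n > x}"
proof -
  have "{z. fst (cex_point z) > x \<and> Q (cex_label (cex_point z))} =
      {b. Q (if b then 1 else 2)} \<times> {n. real n > x}"
    using assms by (auto simp: cex_point_def cex_label_def split: if_splits)
  then show ?thesis
    unfolding measure_cex_space coin_geometric_def
    by (simp add: measure_pmf_prob_product)
qed

lemma cex_tail_indep: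
  assumes "x \<ge> 0"
  shows "measure cex_space {\<omega>\<in>space cex_space. fst \<omega> > x \<and> cex_label \<omega> = y} =
    tailF cex_space fst x * measure cex_space {\<omega>\<in>space cex_space. cex_label \<omega> = y}"
  using cex_tail_prob[OF assms, of "\<lambda>v. v = y"] cex_tail_prob[OF assms, of "\<lambda>_. True"]
  by (simp add: tailF_def cex_label_prob)

lemma cex_tailF_pos: "tailF cex_space fst x > 0"
proof -
  define n where "n = Suc (nat \<lceil>max x 0\<rceil>)"
  have "(False, n) \<in> set_pmf coin_geometric"
    by (simp add: coin_geometric_def set_pmf_iff pmf_pair)
  moreover have "fst (cex_point (False, n)) > x"
    unfolding n_def cex_point_def by simp linarith
  ultimately have "measure_pmf.prob coin_geometric {z. fst (cex_point z) > x} > 0"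
    by (intro measure_pmf_posI) auto
  then show ?thesis
    unfolding tailF_def measure_cex_space .
qed

lemma CD_cex: "CD cex_space fst cex_label (\<lambda>_. 1)"
proof (rule CD_const_one_if_tail_indep[where x\<^sub>0 = 0])
  show "finite (cex_label ` space cex_space)"
    by (rule finite_subset[of _ "{1, 2}"]) (auto simp: cex_label_def)
  show "\<forall>x. tailF cex_space fst x > 0"
    by (simp add: cex_tailF_pos)
qed (fact cex_tail_indep | simp add: cex_space_def cex_label_def)+

lemma not_indep_cex: "\<not> prob_space.indep_var cex_space borel fst borel cex_label"
proof
  interpret prob_space cex_space
    by (rule prob_space_cex_space)
  have atom: "measure_pmf.prob coin_geometric {(True, 0)} = 1/4"
    by (simp add: coin_geometric_def measure_pmf_single pmf_pair)
  have "{z. fst (cex_point z) < 0 \<and> cex_label (cex_point z) = 1} = {(True, 0)}"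
    and "{z. fst (cex_point z) < 0} = {(True, 0)}"
    by (auto simp: cex_point_def cex_label_def split: if_splits)
  then have joint: "prob {\<omega>\<in>space cex_space. fst \<omega> < 0 \<and> cex_label \<omega> = 1} = 1/4"
    and marginal: "prob {\<omega>\<in>space cex_space. fst \<omega> < 0} = 1/4"
    by (simp_all only: measure_cex_space atom)
  have "{b. (if b then 1 else 2) = (1::real)} = {True}"
    by auto
  then have label: "prob {\<omega>\<in>space cex_space. cex_label \<omega> = 1} = 1/2"
    by (simp only: cex_label_prob) (simp add: measure_pmf_single)
  assume "indep_var borel fst borel cex_label"
  then have "prob ((\<lambda>\<omega>. (fst \<omega>, cex_label \<omega>)) -` ({..<0} \<times> {1}) \<inter> space cex_space) =
      prob (fst -` {..<0} \<inter> space cex_space) * prob (cex_label -` {1} \<inter> space cex_space)"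
    by (rule indep_varD) auto
  then have "prob {\<omega>\<in>space cex_space. fst \<omega> < 0 \<and> cex_label \<omega> = 1} =
      prob {\<omega>\<in>space cex_space. fst \<omega> < 0} * prob {\<omega>\<in>space cex_space. cex_label \<omega> = 1}"
    by (simp add: vimage_def Int_def conj_commute)
  with joint marginal label show False
    by simp
qed

theorem proposition2p6:
  shows "(\<forall>(M::'a measure) X Y s.
            prob_space M \<and> CD M X Y s \<and> prob_space.indep_var M borel X borel Y
            \<longrightarrow> (\<forall>y\<in>D_Y M Y. s y = 1)) \<and>
         (\<exists>(M::(real \<times> real) measure) X Y s.
            prob_space M \<and> CD M X Y s \<and> (\<forall>y\<in>D_Y M Y. s y = 1) \<and>
            \<not> prob_space.indep_var M borel X borel Y)"
  using prob_space.CD_indep_imp_eq_1 prob_space_cex_space CD_cex not_indep_cex by blast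

end
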